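(* Let $A$ be a random variable with values in $\{u,v\}$, $\mathbb{P}(A=u)=p_u$, $\mathbb{P}(A=v)=p_v$, $p_u+p_v=1$, and let $(U,V)$ be a random vector independent of $A$ that is bivariate normal with means $\mu_u<0$, $\mu_v<0$, standard deviations $\sigma_u,\sigma_v>0$, and correlation $\rho$. For $z_u,z_v\in\mathbb{R}$ let \[g(z_u,z_v)=p_u\,\mathbb{P}(U>z_u)\,\mathbb{E}[U+V\mid U>z_u]+p_v\,\mathbb{P}(V>z_v)\,\mathbb{E}[U+V\mid V>z_v].\] Define \[\rho_1=\left[\left(\frac{-\mu_u}{\sigma_u}\right)M\left(\frac{-\mu_u}{\sigma_u}\right)\left(1+\frac{\mu_v}{\mu_u}\right)-1\right]\frac{\sigma_u}{\sigma_v},\qquad \rho_2=\left[\left(\frac{-\mu_v}{\sigma_v}\right)M\left(\frac{-\mu_v}{\sigma_v}\right)\left(1+\frac{\mu_u}{\mu_v}\right)-1\right]\frac{\sigma_v}{\sigma_u}.\] If $-1\le\rho<\min(\rho_1,\rho_2)$, then $g(0,0)<0$.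
   Context: $\phi,\Phi$ are the standard normal density and CDF and $M(\alpha)=(1-\Phi(\alpha))/\phi(\alpha)$ is the Mills ratio. $g(z_u,z_v)=\mathbb{E}[D(U+V)]$ with $D=\mathbb{I}(A=u,U>z_u)+\mathbb{I}(A=v,V>z_v)$ is the long-run average overall performance when innovations with primary dimension $u$ (resp. $v$) are adopted iff their effect exceeds the hurdle $z_u$ (resp. $z_v$). *)

theory Defs
  imports "HOL-Probability.Probability"
begin

definition phi :: "real \<Rightarrow> real" where
  "phi x = std_normal_density x"

definition Phi :: "real \<Rightarrow> real" where
  "Phi x = measure (density lborel std_normal_density) {..x}"

definition Mills :: "real \<Rightarrow> real" where
  "Mills a = (1 - Phi a) / phi a"

definition std_normal_measure :: "real measure" where
  "std_normal_measure = density lborel std_normal_density"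

text \<open>This covers the degenerate cases rho = -1, 1 as well.\<close>
definition bivariate_normal :: "real \<Rightarrow> real \<Rightarrow> real \<Rightarrow> real \<Rightarrow> real \<Rightarrow> (real \<times> real) measure" where
  "bivariate_normal mu_u mu_v s_u s_v rho =
     distr (std_normal_measure \<Otimes>\<^sub>M std_normal_measure) borel
       (\<lambda>(x, y). (mu_u + s_u * x, mu_v + s_v * (rho * x + sqrt (1 - rho\<^sup>2) * y)))"

end

theory Submission
  imports Defs
begin

(* Write (U, V) as the image of a standard normal pair (X, Y) under
   (x, y) \<mapsto> (mu_u + s_u x, mu_v + s_v (rho x + c y)) with c = sqrt (1 - rho^2).
   Then the events U > z and V > z are half-planes {b < alpha X + beta Y} with
   alpha^2 + beta^2 = 1, on which P = 1 - Phi b, E[X; .] = alpha phi b and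
   E[Y; .] = beta phi b: by Fubini, the inner integral is a tail moment of the normal
   density and the outer one a Gaussian convolution.  Hence
     E[U + V; U > 0] = (mu_u + mu_v) (1 - Phi a) + (s_u + rho s_v) phi a,  a = - mu_u / s_u,
   and rho < rho_1 is exactly the condition that this is negative; symmetrically for V.
   Finally g(0,0) is a convex combination of these two negative numbers. *)

interpretation std_normal: prob_space std_normal_measure
  unfolding std_normal_measure_def by (rule prob_space_normal_density) simp

lemma sets_std_normal_measure [measurable_cong, simp]: "sets std_normal_measure = sets borel"
  by (simp add: std_normal_measure_def)

lemma space_std_normal_measure [simp]: "space std_normal_measure = UNIV"
  by (simp add: std_normal_measure_def)

lemma integral_std_normal_measure:
  assumes [measurable]: "f \<in> borel_measurable borel"
  shows "integral\<^sup>L std_normal_measure f = (\<integral>x. std_normal_density x * f x \<partial>lborel)"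
  unfolding std_normal_measure_def by (subst integral_density) auto

lemma integrable_std_normal_measure_iff:
  assumes [measurable]: "f \<in> borel_measurable borel"
  shows "integrable std_normal_measure f \<longleftrightarrow> integrable lborel (\<lambda>x. std_normal_density x * f x)"
  unfolding std_normal_measure_def by (subst integrable_density) auto

lemma measure_std_normal_greaterThan: "measure std_normal_measure {a<..} = 1 - Phi a"
proof -
  have "{a<..} = space std_normal_measure - {..a}" by auto
  then have "measure std_normal_measure {a<..} = 1 - measure std_normal_measure {..a}"
    using std_normal.prob_compl[of "{..a}"] by simp
  then show ?thesis by (simp add: Phi_def std_normal_measure_def)
qed

lemma distributed_std_normal_iff:
  "distributed M lborel X std_normal_density \<longleftrightarrow>
     X \<in> borel_measurable M \<and> distr M borel X = std_normal_measure"
proof -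
  have "distr M lborel X = distr M borel X" by (rule distr_cong) simp_all
  then show ?thesis
    by (auto simp: distributed_def std_normal_measure_def measurable_lborel2)
qed

lemma std_normal_density_minus [simp]: "std_normal_density (- x) = std_normal_density x"
  by (simp add: std_normal_density_def)

lemma std_normal_density_tendsto_at_top: "(std_normal_density \<longlongrightarrow> 0) at_top"
proof -
  have "filterlim (\<lambda>x::real. x\<^sup>2 * (1 / 2)) at_top at_top"
    by (intro filterlim_at_top_mult_tendsto_pos[OF tendsto_const] filterlim_pow_at_top
        filterlim_ident) simp_all
  then have "filterlim (\<lambda>x::real. - x\<^sup>2 / 2) at_bot at_top"
    by (simp add: filterlim_uminus_at_bot)
  then have "((\<lambda>x::real. exp (- x\<^sup>2 / 2)) \<longlongrightarrow> 0) at_top"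
    by (rule filterlim_compose[OF exp_at_bot])
  then have "((\<lambda>x. 1 / sqrt (2 * pi) * exp (- x\<^sup>2 / 2)) \<longlongrightarrow> 1 / sqrt (2 * pi) * 0) at_top"
    by (intro tendsto_intros)
  then show ?thesis
    by (simp add: std_normal_density_def[abs_def])
qed

lemma std_normal_upper_tail_moment:
  "(\<integral>x. std_normal_density x * x * indicator {t<..} x \<partial>lborel) = std_normal_density t"
proof -
  have "(LBINT x=ereal t..\<infinity>. std_normal_density x * x) = 0 - (- std_normal_density t)"
  proof (rule interval_integral_FTC_integrable[where F="\<lambda>x. - std_normal_density x"])
    show "((\<lambda>x. - std_normal_density x) has_vector_derivative std_normal_density x * x) (at x)"
      for x
      unfolding std_normal_density_def has_real_derivative_iff_has_vector_derivative[symmetric]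
      by (auto intro!: derivative_eq_intros simp: field_simps)
    show "set_integrable lborel (einterval (ereal t) \<infinity>) (\<lambda>x. std_normal_density x * x)"
      unfolding set_integrable_def
      using integrable_std_normal_moment[of 1] by (intro integrable_mult_indicator) auto
    show "(((\<lambda>x. - std_normal_density x) \<circ> real_of_ereal) \<longlongrightarrow> - std_normal_density t)
        (at_right (ereal t))"
      unfolding ereal_tendsto_simps std_normal_density_def by (auto intro!: tendsto_intros)
    show "(((\<lambda>x. - std_normal_density x) \<circ> real_of_ereal) \<longlongrightarrow> 0) (at_left \<infinity>)"
      unfolding ereal_tendsto_simps
      using tendsto_minus[OF std_normal_density_tendsto_at_top] by simp
  qed (auto simp: std_normal_density_def intro!: continuous_intros)
  then show ?thesis
    by (simp add: interval_integral_to_infinity_eq set_lebesgue_integral_def ac_simps)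
qed

lemma std_normal_lower_tail_moment:
  "(\<integral>x. std_normal_density x * x * indicator {..<t} x \<partial>lborel) = - std_normal_density t"
proof -
  have "(\<integral>x. std_normal_density x * x * indicator {..<t} x \<partial>lborel)
      = (\<integral>x. - (std_normal_density x * x * indicator {-t<..} x) \<partial>lborel)"
    by (subst lborel_integral_real_affine[where c="-1" and t=0])
       (auto intro!: Bochner_Integration.integral_cong split: split_indicator)
  then show ?thesis
    using std_normal_upper_tail_moment[of "-t"] by simp
qed

lemma integral_std_normal_half_line:
  "(\<integral>x. x * indicator {x. c < \<alpha> * x} x \<partial>std_normal_measure) = sgn \<alpha> * std_normal_density (c / \<alpha>)"
proof -
  have "(\<integral>x. x * indicator {x. c < \<alpha> * x} x \<partial>std_normal_measure)
      = (\<integral>x. std_normal_density x * x * indicator {x. c < \<alpha> * x} x \<partial>lborel)"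
    by (subst integral_std_normal_measure) (simp_all add: ac_simps)
  also have "\<dots> = sgn \<alpha> * std_normal_density (c / \<alpha>)"
  proof (cases \<alpha> "0::real" rule: linorder_cases)
    case less
    then have "{x. c < \<alpha> * x} = {..<c / \<alpha>}"
      by (auto simp: neg_less_divide_eq mult.commute)
    then show ?thesis
      using less std_normal_lower_tail_moment by simp
  next
    case equal
    have "(\<integral>x. std_normal_density x * x ^ (2 * 0 + 1) \<partial>lborel) = 0"
      by (rule integral_std_normal_moment_odd)
    then show ?thesis
      using equal by (simp add: indicator_def)
  next
    case greater
    then have "{x. c < \<alpha> * x} = {c / \<alpha><..}"
      by (auto simp: pos_divide_less_eq mult.commute)
    then show ?thesis
      using greater std_normal_upper_tail_moment by simp
  qed
  finally show ?thesis .
qed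

lemma std_normal_density_mult_rescaled:
  assumes "\<alpha> \<noteq> 0" "\<alpha>\<^sup>2 + \<beta>\<^sup>2 = 1"
  shows "std_normal_density s * std_normal_density ((b - \<beta> * s) / \<alpha>)
    = \<bar>\<alpha>\<bar> * std_normal_density b * normal_density (\<beta> * b) \<bar>\<alpha>\<bar> s"
proof -
  \<comment> \<open>completing the square in \<open>s\<close>\<close>
  have "\<alpha>\<^sup>2 * s\<^sup>2 + (b - \<beta> * s)\<^sup>2 = \<alpha>\<^sup>2 * b\<^sup>2 + (s - \<beta> * b)\<^sup>2"
    using assms(2) by algebra
  then have "- s\<^sup>2 / 2 + - ((b - \<beta> * s) / \<alpha>)\<^sup>2 / 2 = - b\<^sup>2 / 2 + - (s - \<beta> * b)\<^sup>2 / (2 * \<alpha>\<^sup>2)"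
    using assms(1) by (simp add: field_simps power2_eq_square)
  then have "exp (- s\<^sup>2 / 2) * exp (- ((b - \<beta> * s) / \<alpha>)\<^sup>2 / 2)
      = exp (- b\<^sup>2 / 2) * exp (- (s - \<beta> * b)\<^sup>2 / (2 * \<alpha>\<^sup>2))"
    by (simp only: mult_exp_exp)
  moreover have "sqrt (2 * pi * \<alpha>\<^sup>2) = sqrt (2 * pi) * \<bar>\<alpha>\<bar>"
    by (simp add: real_sqrt_mult)
  ultimately show ?thesis
    using assms(1) by (simp add: std_normal_density_def normal_density_def field_simps)
qed

lemma integral_std_normal_sgn_density_rescaled:
  assumes "\<alpha>\<^sup>2 + \<beta>\<^sup>2 = 1"
  shows "(\<integral>s. sgn \<alpha> * std_normal_density ((b - \<beta> * s) / \<alpha>) \<partial>std_normal_measure)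
    = \<alpha> * std_normal_density b"
proof (cases "\<alpha> = 0")
  case False
  have "(\<integral>s. sgn \<alpha> * std_normal_density ((b - \<beta> * s) / \<alpha>) \<partial>std_normal_measure)
      = sgn \<alpha> * (\<integral>s. std_normal_density s * std_normal_density ((b - \<beta> * s) / \<alpha>) \<partial>lborel)"
    by (subst integral_std_normal_measure) (simp_all add: ac_simps)
  also have "\<dots> = sgn \<alpha> * (\<bar>\<alpha>\<bar> * std_normal_density b)"
    using False by (simp add: std_normal_density_mult_rescaled[OF False assms])
  also have "\<dots> = \<alpha> * std_normal_density b"
    by (metis mult.assoc sgn_mult_abs)
  finally show ?thesis .
qed simp

interpretation std_normal_pair: pair_prob_space std_normal_measure std_normal_measure ..

abbreviation std_normal_plane :: "(real \<times> real) measure"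
  where "std_normal_plane \<equiv> std_normal_measure \<Otimes>\<^sub>M std_normal_measure"

lemma sets_std_normal_plane [measurable_cong]: "sets std_normal_plane = sets (borel \<Otimes>\<^sub>M borel)"
  by (intro sets_pair_measure_cong) simp_all

lemma space_std_normal_plane [simp]: "space std_normal_plane = UNIV"
  by (simp add: space_pair_measure)

lemma distr_std_normal_plane_fst: "distr std_normal_plane borel fst = std_normal_measure"
proof -
  have "distr std_normal_plane borel fst = distr std_normal_plane std_normal_measure fst"
    by (rule distr_cong) simp_all
  then show ?thesis by (simp add: std_normal.distr_pair_fst)
qed

lemma distr_std_normal_plane_snd: "distr std_normal_plane borel snd = std_normal_measure"
proof -
  have "distr std_normal_plane borel snd
      = distr (distr std_normal_plane std_normal_plane (\<lambda>(x, y). (y, x))) borel snd"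
    by (simp flip: std_normal_pair.distr_pair_swap)
  also have "\<dots> = distr std_normal_plane borel (snd \<circ> (\<lambda>(x, y). (y, x)))"
    by (rule distr_distr) simp_all
  also have "\<dots> = distr std_normal_plane borel fst"
    by (simp add: comp_def case_prod_beta')
  finally show ?thesis by (simp add: distr_std_normal_plane_fst)
qed

lemma indep_var_std_normal_plane: "std_normal_pair.P.indep_var borel fst borel snd"
proof -
  have "distr std_normal_plane (borel \<Otimes>\<^sub>M borel) (\<lambda>z. (fst z, snd z))
      = distr std_normal_plane std_normal_plane (\<lambda>z. z)"
    by (rule distr_cong) (simp_all add: sets_std_normal_plane)
  then show ?thesis
    by (simp add: std_normal_pair.P.indep_var_distribution_eq distr_std_normal_plane_fst
        distr_std_normal_plane_snd)
qed

lemma distributed_std_normal_plane_unit_combination: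
  assumes "\<alpha>\<^sup>2 + \<beta>\<^sup>2 = 1"
  shows "distributed std_normal_plane lborel (\<lambda>z. \<alpha> * fst z + \<beta> * snd z) std_normal_density"
proof -
  have fst: "distributed std_normal_plane lborel fst std_normal_density"
    and snd: "distributed std_normal_plane lborel snd std_normal_density"
    by (simp_all add: distributed_std_normal_iff distr_std_normal_plane_fst
        distr_std_normal_plane_snd)
  have scaled: "distributed std_normal_plane lborel (\<lambda>z. c * X z) (normal_density 0 \<bar>c\<bar>)"
    if "c \<noteq> 0" and "distributed std_normal_plane lborel X std_normal_density" for c X
    using std_normal_pair.P.normal_density_affine[OF that(2), of c 0] that(1) by simp
  consider "\<beta> = 0" "\<bar>\<alpha>\<bar> = 1" | "\<alpha> = 0" "\<bar>\<beta>\<bar> = 1" | "\<alpha> \<noteq> 0" "\<beta> \<noteq> 0"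
    using assms by (cases "\<alpha> = 0"; cases "\<beta> = 0") (auto simp: power2_eq_1_iff)
  then show ?thesis
  proof cases
    case 1
    then show ?thesis using scaled[OF _ fst, of \<alpha>] by auto
  next
    case 2
    then show ?thesis using scaled[OF _ snd, of \<beta>] by auto
  next
    case 3
    have "std_normal_pair.P.indep_var borel ((*) \<alpha> \<circ> fst) borel ((*) \<beta> \<circ> snd)"
      by (rule std_normal_pair.P.indep_var_compose[OF indep_var_std_normal_plane]) simp_all
    then have "distributed std_normal_plane lborel (\<lambda>z. \<alpha> * fst z + \<beta> * snd z)
        (normal_density (0 + 0) (sqrt (\<bar>\<alpha>\<bar>\<^sup>2 + \<bar>\<beta>\<bar>\<^sup>2)))"
      using 3 by (intro std_normal_pair.P.add_indep_normal scaled fst snd) (simp_all add: comp_def)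
    then show ?thesis using assms by simp
  qed
qed

lemma measure_std_normal_half_plane:
  assumes "\<alpha>\<^sup>2 + \<beta>\<^sup>2 = 1"
  shows "measure std_normal_plane {z. b < \<alpha> * fst z + \<beta> * snd z} = 1 - Phi b"
proof -
  let ?W = "\<lambda>z. \<alpha> * fst z + \<beta> * snd z"
  have W: "?W \<in> borel_measurable std_normal_plane"
    "distr std_normal_plane borel ?W = std_normal_measure"
    using distributed_std_normal_plane_unit_combination[OF assms]
    by (simp_all add: distributed_std_normal_iff)
  have "measure std_normal_plane {z. b < ?W z} = measure (distr std_normal_plane borel ?W) {b<..}"
    using W(1) by (subst measure_distr) (simp_all add: vimage_def)
  then show ?thesis
    by (simp add: W(2) measure_std_normal_greaterThan)
qed

lemma integrable_std_normal_plane_fst: "integrable std_normal_plane fst"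
  and integrable_std_normal_plane_snd: "integrable std_normal_plane snd"
proof -
  have id: "integrable std_normal_measure (\<lambda>x. x)"
    using integrable_std_normal_moment[of 1] by (simp add: integrable_std_normal_measure_iff)
  have "fst \<in> borel_measurable std_normal_plane" "snd \<in> borel_measurable std_normal_plane"
    by measurable
  from this[THEN integrable_distr_eq, OF measurable_id] id
  show "integrable std_normal_plane fst" "integrable std_normal_plane snd"
    by (simp_all only: distr_std_normal_plane_fst distr_std_normal_plane_snd)
qed

lemma half_plane_in_sets_std_normal_plane:
  "{z. b < \<alpha> * fst z + \<beta> * snd z} \<in> sets std_normal_plane"
proof -
  have "{z \<in> space std_normal_plane. b < \<alpha> * fst z + \<beta> * snd z} \<in> sets std_normal_plane"
    by measurable
  then show ?thesis by simp
qed

lemma integral_fst_std_normal_half_plane: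
  assumes "\<alpha>\<^sup>2 + \<beta>\<^sup>2 = 1"
  shows "(\<integral>z. fst z * indicator {z. b < \<alpha> * fst z + \<beta> * snd z} z \<partial>std_normal_plane)
    = \<alpha> * std_normal_density b"
proof -
  let ?S = "{z. b < \<alpha> * fst z + \<beta> * snd z}"
  have "integrable std_normal_plane (\<lambda>z. indicator ?S z *\<^sub>R fst z)"
    by (intro integrable_mult_indicator half_plane_in_sets_std_normal_plane
        integrable_std_normal_plane_fst)
  then have int: "integrable std_normal_plane (\<lambda>(x, y). x * indicator ?S (x, y))"
    by (simp only: case_prod_beta' prod.collapse real_scaleR_def mult.commute)
  have "(\<integral>z. fst z * indicator ?S z \<partial>std_normal_plane)
      = (\<integral>y. (\<integral>x. x * indicator ?S (x, y) \<partial>std_normal_measure) \<partial>std_normal_measure)"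
    using std_normal_pair.integral_snd[OF int] by (simp only: case_prod_beta' prod.collapse)
  also have "\<dots> = (\<integral>y. (\<integral>x. x * indicator {x. b - \<beta> * y < \<alpha> * x} x \<partial>std_normal_measure)
      \<partial>std_normal_measure)"
    by (intro Bochner_Integration.integral_cong refl) (auto simp: indicator_def)
  also have "\<dots> = (\<integral>y. sgn \<alpha> * std_normal_density ((b - \<beta> * y) / \<alpha>) \<partial>std_normal_measure)"
    by (simp only: integral_std_normal_half_line)
  finally show ?thesis
    by (simp only: integral_std_normal_sgn_density_rescaled[OF assms])
qed

lemma integral_snd_std_normal_half_plane:
  assumes "\<alpha>\<^sup>2 + \<beta>\<^sup>2 = 1"
  shows "(\<integral>z. snd z * indicator {z. b < \<alpha> * fst z + \<beta> * snd z} z \<partial>std_normal_plane)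
    = \<beta> * std_normal_density b"
proof -
  let ?S = "{z. b < \<alpha> * fst z + \<beta> * snd z}"
  have "integrable std_normal_plane (\<lambda>z. indicator ?S z *\<^sub>R snd z)"
    by (intro integrable_mult_indicator half_plane_in_sets_std_normal_plane
        integrable_std_normal_plane_snd)
  then have int: "integrable std_normal_plane (\<lambda>(x, y). y * indicator ?S (x, y))"
    by (simp only: case_prod_beta' prod.collapse real_scaleR_def mult.commute)
  have "(\<integral>z. snd z * indicator ?S z \<partial>std_normal_plane)
      = (\<integral>x. (\<integral>y. y * indicator ?S (x, y) \<partial>std_normal_measure) \<partial>std_normal_measure)"
    using std_normal_pair.integral_fst[OF int] by (simp only: case_prod_beta' prod.collapse)
  also have "\<dots> = (\<integral>x. (\<integral>y. y * indicator {y. b - \<alpha> * x < \<beta> * y} y \<partial>std_normal_measure)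
      \<partial>std_normal_measure)"
    by (intro Bochner_Integration.integral_cong refl) (auto simp: indicator_def)
  also have "\<dots> = (\<integral>x. sgn \<beta> * std_normal_density ((b - \<alpha> * x) / \<beta>) \<partial>std_normal_measure)"
    by (simp only: integral_std_normal_half_line)
  finally show ?thesis
    using assms by (simp only: integral_std_normal_sgn_density_rescaled add.commute)
qed

lemma integral_affine_std_normal_half_plane:
  assumes "\<alpha>\<^sup>2 + \<beta>\<^sup>2 = 1"
  shows "(\<integral>z. (k0 + k1 * fst z + k2 * snd z) * indicator {z. b < \<alpha> * fst z + \<beta> * snd z} z
      \<partial>std_normal_plane)
    = k0 * (1 - Phi b) + (k1 * \<alpha> + k2 * \<beta>) * std_normal_density b"
proof -
  let ?S = "{z. b < \<alpha> * fst z + \<beta> * snd z}"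
  have S: "?S \<in> sets std_normal_plane" by (rule half_plane_in_sets_std_normal_plane)
  have int0: "integrable std_normal_plane (\<lambda>z. k0 * indicator ?S z)"
    using S by (intro integrable_mult_right integrable_real_indicator)
      (simp_all add: std_normal_pair.P.emeasure_eq_measure)
  have int1: "integrable std_normal_plane (\<lambda>z. k1 * (fst z * indicator ?S z))"
    and int2: "integrable std_normal_plane (\<lambda>z. k2 * (snd z * indicator ?S z))"
    using integrable_mult_indicator[OF S integrable_std_normal_plane_fst]
      integrable_mult_indicator[OF S integrable_std_normal_plane_snd]
    by (simp_all only: integrable_mult_right real_scaleR_def mult.commute)
  have "(\<integral>z. (k0 + k1 * fst z + k2 * snd z) * indicator ?S z \<partial>std_normal_plane)
      = (\<integral>z. k0 * indicator ?S z + k1 * (fst z * indicator ?S z) + k2 * (snd z * indicator ?S z)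
          \<partial>std_normal_plane)"
    by (intro Bochner_Integration.integral_cong) (simp_all add: algebra_simps)
  also have "\<dots> = k0 * measure std_normal_plane ?S
      + k1 * (\<integral>z. fst z * indicator ?S z \<partial>std_normal_plane)
      + k2 * (\<integral>z. snd z * indicator ?S z \<partial>std_normal_plane)"
    by (simp only: integral_mult_right_zero Bochner_Integration.integral_add[OF int0 int1]
        Bochner_Integration.integral_add[OF Bochner_Integration.integrable_add[OF int0 int1] int2])
      simp
  finally show ?thesis
    using assms by (simp add: measure_std_normal_half_plane integral_fst_std_normal_half_plane
        integral_snd_std_normal_half_plane algebra_simps)
qed

lemma integral_bivariate_normal:
  fixes h :: "real \<times> real \<Rightarrow> real"
  assumes "h \<in> borel_measurable (borel \<Otimes>\<^sub>M borel)"
  shows "integral\<^sup>L (bivariate_normal mu_u mu_v s_u s_v rho) h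
    = (\<integral>w. h (mu_u + s_u * fst w, mu_v + s_v * (rho * fst w + sqrt (1 - rho\<^sup>2) * snd w))
        \<partial>std_normal_plane)"
proof -
  have "(\<lambda>(x, y). (mu_u + s_u * x, mu_v + s_v * (rho * x + sqrt (1 - rho\<^sup>2) * y)))
      \<in> measurable std_normal_plane (borel \<Otimes>\<^sub>M borel)"
    by measurable
  from integral_distr[OF this assms] show ?thesis
    unfolding bivariate_normal_def borel_prod[symmetric] by (simp add: case_prod_beta')
qed

lemma integral_sum_above_bivariate_normal:
  assumes "rho\<^sup>2 \<le> 1" "s_u > 0" "s_v > 0"
  shows "(\<integral>p. (fst p + snd p) * indicator {p. z < fst p} p \<partial>bivariate_normal mu_u mu_v s_u s_v rho)
      = (mu_u + mu_v) * (1 - Phi ((z - mu_u) / s_u))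
        + (s_u + rho * s_v) * std_normal_density ((z - mu_u) / s_u)" (is "?LU = ?RU")
    and "(\<integral>p. (fst p + snd p) * indicator {p. z < snd p} p \<partial>bivariate_normal mu_u mu_v s_u s_v rho)
      = (mu_u + mu_v) * (1 - Phi ((z - mu_v) / s_v))
        + (s_v + rho * s_u) * std_normal_density ((z - mu_v) / s_v)" (is "?LV = ?RV")
proof -
  let ?c = "sqrt (1 - rho\<^sup>2)"
  let ?affine = "\<lambda>w. (mu_u + mu_v) + (s_u + rho * s_v) * fst w + (s_v * ?c) * snd w"
  have unit: "rho\<^sup>2 + ?c\<^sup>2 = 1"
    using assms(1) by simp
  \<comment> \<open>In standard coordinates both events are half-planes, with unit normals \<open>(1, 0)\<close>
     and \<open>(rho, c)\<close>.\<close>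
  have "?LU = (\<integral>w. ?affine w * indicator {w. (z - mu_u) / s_u < 1 * fst w + 0 * snd w} w
      \<partial>std_normal_plane)"
    using assms(2) by (subst integral_bivariate_normal, measurable)
      (auto intro!: Bochner_Integration.integral_cong
        simp: indicator_def pos_divide_less_eq algebra_simps)
  then show "?LU = ?RU"
    using integral_affine_std_normal_half_plane[of 1 0] by simp
  have "?LV = (\<integral>w. ?affine w * indicator {w. (z - mu_v) / s_v < rho * fst w + ?c * snd w} w
      \<partial>std_normal_plane)"
    using assms(3) by (subst integral_bivariate_normal, measurable)
      (auto intro!: Bochner_Integration.integral_cong
        simp: indicator_def pos_divide_less_eq algebra_simps)
  also have "\<dots> = (mu_u + mu_v) * (1 - Phi ((z - mu_v) / s_v))
      + (s_u * rho + s_v * (rho\<^sup>2 + ?c\<^sup>2)) * std_normal_density ((z - mu_v) / s_v)"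
    by (simp only: integral_affine_std_normal_half_plane[OF unit])
      (simp add: power2_eq_square algebra_simps)
  finally show "?LV = ?RV"
    by (simp only: unit) (simp add: algebra_simps)
qed

lemma integral_sum_above_distr_bivariate_normal:
  assumes [measurable]: "U \<in> borel_measurable M" "V \<in> borel_measurable M"
    and law: "distr M borel (\<lambda>\<omega>. (U \<omega>, V \<omega>)) = bivariate_normal mu_u mu_v s_u s_v rho"
    and "rho\<^sup>2 \<le> 1" "s_u > 0" "s_v > 0"
  shows "(\<integral>\<omega>. (U \<omega> + V \<omega>) * indicator {\<omega> \<in> space M. z < U \<omega>} \<omega> \<partial>M)
      = (mu_u + mu_v) * (1 - Phi ((z - mu_u) / s_u))
        + (s_u + rho * s_v) * std_normal_density ((z - mu_u) / s_u)" (is "?LU = ?RU")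
    and "(\<integral>\<omega>. (U \<omega> + V \<omega>) * indicator {\<omega> \<in> space M. z < V \<omega>} \<omega> \<partial>M)
      = (mu_u + mu_v) * (1 - Phi ((z - mu_v) / s_v))
        + (s_v + rho * s_u) * std_normal_density ((z - mu_v) / s_v)" (is "?LV = ?RV")
proof -
  have transfer: "(\<integral>\<omega>. h (U \<omega>, V \<omega>) \<partial>M) = integral\<^sup>L (bivariate_normal mu_u mu_v s_u s_v rho) h"
    if "h \<in> borel_measurable borel" for h :: "real \<times> real \<Rightarrow> real"
    using integral_distr[of "\<lambda>\<omega>. (U \<omega>, V \<omega>)" M borel h] that by (simp add: law)
  have "?LU = (\<integral>\<omega>. (\<lambda>p. (fst p + snd p) * indicator {p. z < fst p} p) (U \<omega>, V \<omega>) \<partial>M)"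
    by (intro Bochner_Integration.integral_cong) (simp_all add: indicator_def)
  also have "\<dots> = (\<integral>p. (fst p + snd p) * indicator {p. z < fst p} p
      \<partial>bivariate_normal mu_u mu_v s_u s_v rho)"
    by (rule transfer) (simp add: borel_prod[symmetric])
  finally show "?LU = ?RU"
    using integral_sum_above_bivariate_normal[OF assms(4-6)] by simp
  have "?LV = (\<integral>\<omega>. (\<lambda>p. (fst p + snd p) * indicator {p. z < snd p} p) (U \<omega>, V \<omega>) \<partial>M)"
    by (intro Bochner_Integration.integral_cong) (simp_all add: indicator_def)
  also have "\<dots> = (\<integral>p. (fst p + snd p) * indicator {p. z < snd p} p
      \<partial>bivariate_normal mu_u mu_v s_u s_v rho)"
    by (rule transfer) (simp add: borel_prod[symmetric])
  finally show "?LV = ?RV"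
    using integral_sum_above_bivariate_normal[OF assms(4-6)] by simp
qed

(* Also for measure M S = 0, where the division yields 0 by convention. *)
lemma (in finite_measure) measure_mult_integral_indicator_divide:
  assumes "S \<in> sets M"
  shows "measure M S * ((\<integral>\<omega>. f \<omega> * indicator S \<omega> \<partial>M) / measure M S) = (\<integral>\<omega>. f \<omega> * indicator S \<omega> \<partial>M)"
proof (cases "measure M S = 0")
  case True
  then have "AE \<omega> in M. \<omega> \<notin> S"
    using assms by (intro AE_not_in) (simp add: null_sets_def emeasure_eq_measure)
  then have "(\<integral>\<omega>. f \<omega> * indicator S \<omega> \<partial>M) = 0"
    by (intro integral_eq_zero_AE) (auto elim: AE_mp)
  then show ?thesis by simp
qed simp

lemma tail_sum_neg_of_rho_lt:
  fixes s t mu nu r :: real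
  assumes "s > 0" "t > 0" "mu < 0"
    and "r < ((- mu / s) * Mills (- mu / s) * (1 + nu / mu) - 1) * (s / t)"
  shows "(mu + nu) * (1 - Phi (- mu / s)) + (s + r * t) * phi (- mu / s) < 0"
proof -
  have "phi (- mu / s) > 0"
    by (simp add: phi_def normal_density_pos)
  with assms have "((- mu / s) * Mills (- mu / s) * (1 + nu / mu) - 1) * (s / t)
      = (- (mu + nu) * (1 - Phi (- mu / s)) - s * phi (- mu / s)) / (t * phi (- mu / s))"
    by (simp add: Mills_def field_simps)
  with assms \<open>phi (- mu / s) > 0\<close> show ?thesis
    by (simp add: pos_less_divide_eq algebra_simps)
qed

theorem proposition3:
  fixes M :: "'a measure" and A :: "'a \<Rightarrow> bool" and U V :: "'a \<Rightarrow> real"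
    and mu_u mu_v s_u s_v rho p_u p_v :: real
  assumes "prob_space M"
    and "A \<in> measurable M (count_space UNIV)"
    and "U \<in> borel_measurable M" and "V \<in> borel_measurable M"
    and "p_u = measure M {\<omega> \<in> space M. A \<omega>}"
    and "p_v = measure M {\<omega> \<in> space M. \<not> A \<omega>}"
    and "\<forall>B \<in> sets (borel :: (real \<times> real) measure).
           measure M {\<omega> \<in> space M. A \<omega> \<and> (U \<omega>, V \<omega>) \<in> B}
         = measure M {\<omega> \<in> space M. A \<omega>} * measure M {\<omega> \<in> space M. (U \<omega>, V \<omega>) \<in> B}"
    and "distr M borel (\<lambda>\<omega>. (U \<omega>, V \<omega>)) = bivariate_normal mu_u mu_v s_u s_v rho"
    and "mu_u < 0" and "mu_v < 0" and "s_u > 0" and "s_v > 0"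
    and "rho \<le> 1"
    and "-1 \<le> rho"
    and "rho < min
          (((- mu_u / s_u) * Mills (- mu_u / s_u) * (1 + mu_v / mu_u) - 1) * (s_u / s_v))
          (((- mu_v / s_v) * Mills (- mu_v / s_v) * (1 + mu_u / mu_v) - 1) * (s_v / s_u))"
  shows "(let g = (\<lambda>z_u z_v.
            p_u * measure M {\<omega> \<in> space M. U \<omega> > z_u}
              * ((\<integral>\<omega>. (U \<omega> + V \<omega>) * indicator {\<omega> \<in> space M. U \<omega> > z_u} \<omega> \<partial>M)
                 / measure M {\<omega> \<in> space M. U \<omega> > z_u})
          + p_v * measure M {\<omega> \<in> space M. V \<omega> > z_v}
              * ((\<integral>\<omega>. (U \<omega> + V \<omega>) * indicator {\<omega> \<in> space M. V \<omega> > z_v} \<omega> \<partial>M)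
                 / measure M {\<omega> \<in> space M. V \<omega> > z_v}))
         in g 0 0 < 0)"
proof -
  interpret M: prob_space M by fact
  have "rho\<^sup>2 \<le> 1"
    using assms(13,14) by (simp add: abs_square_le_1)
  note sum_above =
    integral_sum_above_distr_bivariate_normal[OF assms(3,4,8) this assms(11,12), of 0]
  have neg_u: "(\<integral>\<omega>. (U \<omega> + V \<omega>) * indicator {\<omega> \<in> space M. 0 < U \<omega>} \<omega> \<partial>M) < 0"
    using tail_sum_neg_of_rho_lt[OF assms(11,12,9), of rho mu_v] assms(15)
    by (simp add: sum_above phi_def)
  have neg_v: "(\<integral>\<omega>. (U \<omega> + V \<omega>) * indicator {\<omega> \<in> space M. 0 < V \<omega>} \<omega> \<partial>M) < 0"
    using tail_sum_neg_of_rho_lt[OF assms(12,11,10), of rho mu_u] assms(15)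
    by (simp add: sum_above phi_def add.commute)
  have "{\<omega> \<in> space M. A \<omega>} \<in> sets M"
    using assms(2) by measurable
  moreover have "{\<omega> \<in> space M. \<not> A \<omega>} = space M - {\<omega> \<in> space M. A \<omega>}"
    by blast
  ultimately have "p_u + p_v = 1"
    using assms(5,6) by (simp add: M.prob_compl)
  then have "p_u * (\<integral>\<omega>. (U \<omega> + V \<omega>) * indicator {\<omega> \<in> space M. 0 < U \<omega>} \<omega> \<partial>M)
      + p_v * (\<integral>\<omega>. (U \<omega> + V \<omega>) * indicator {\<omega> \<in> space M. 0 < V \<omega>} \<omega> \<partial>M) < 0"
    using convex_bound_lt[OF neg_u neg_v, of p_u p_v] assms(5,6) by simp
  moreover have "{\<omega> \<in> space M. 0 < U \<omega>} \<in> sets M" "{\<omega> \<in> space M. 0 < V \<omega>} \<in> sets M"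
    using assms(3,4) by measurable
  ultimately show ?thesis
    unfolding Let_def mult.assoc by (simp only: M.measure_mult_integral_indicator_divide)
qed

end
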